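(* A quadratical quasigroup of order $9$ is not $k$-translatable, for any $k\in\{1,\dots,8\}$, with respect to any ordering of its elements.
   Context: A quadratical quasigroup is a quasigroup satisfying $xy\cdot x=zx\cdot yz$ for all $x,y,z$ (equivalently, a groupoid satisfying $x\cdot x=x$, $yx\cdot xy=x$, $xy\cdot zw=xz\cdot yw$). A finite groupoid with ordering $q_1,\dots,q_n$ is $k$-translatable ($1\le k<n$) with respect to this ordering if $q_i\cdot q_j=q_{i-1}\cdot q_{j-k}$ for all $i\in\{2,\dots,n\}$, $j\in\{1,\dots,n\}$, indices taken modulo $n$ in $\{1,\dots,n\}$. *)

theory Defs
  imports Main
begin

definition closed_op :: "'a set \<Rightarrow> ('a \<Rightarrow> 'a \<Rightarrow> 'a) \<Rightarrow> bool" where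
  "closed_op Q m \<longleftrightarrow> (\<forall>x\<in>Q. \<forall>y\<in>Q. m x y \<in> Q)"

definition quasigroup :: "'a set \<Rightarrow> ('a \<Rightarrow> 'a \<Rightarrow> 'a) \<Rightarrow> bool" where
  "quasigroup Q m \<longleftrightarrow> closed_op Q m \<and>
     (\<forall>a\<in>Q. \<forall>b\<in>Q. (\<exists>!x. x \<in> Q \<and> m a x = b) \<and> (\<exists>!y. y \<in> Q \<and> m y a = b))"

definition quadratical :: "'a set \<Rightarrow> ('a \<Rightarrow> 'a \<Rightarrow> 'a) \<Rightarrow> bool" where
  "quadratical Q m \<longleftrightarrow> quasigroup Q m \<and>
     (\<forall>x\<in>Q. \<forall>y\<in>Q. \<forall>z\<in>Q. m (m x y) x = m (m z x) (m y z))"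

text \<open>An ordering q_1..q_n of Q is encoded 0-indexed as a bijection q : {0..<n} -> Q
  (q i here is q_{i+1} of the paper). k-translatability: q_i q_j = q_{i-1} q_{j-k},
  for paper indices i in {2..n}, j in {1..n}, indices mod n.\<close>

definition k_translatable :: "'a set \<Rightarrow> ('a \<Rightarrow> 'a \<Rightarrow> 'a) \<Rightarrow> (nat \<Rightarrow> 'a) \<Rightarrow> nat \<Rightarrow> bool" where
  "k_translatable Q m q k \<longleftrightarrow> (let n = card Q in
     finite Q \<and> bij_betw q {..<n} Q \<and> 1 \<le> k \<and> k < n \<and>
     (\<forall>i\<in>{1..<n}. \<forall>j<n. m (q i) (q j) = m (q (i - 1)) (q ((j + n - k) mod n))))"

end

theory Submission
  imports Defs "HOL-Number_Theory.Cong"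
begin

text \<open>In a k-translatable ordering of an n-element groupoid every product is a left translate
  by q_0, namely q_i q_j = q_0 q_(j - ik), with indices mod n. If the groupoid is idempotent, then
  q_i = q_i q_i = q_0 q_(i(1 - k)), so the product q_i q_j is the element q_c whose index solves
  c(1 - k) = j - ik (mod n). For n = 9 this index arithmetic clashes with the quasigroup axioms:
  for k = 1, 4, 7 the index c = 3 solves the equation for q_0 q_0; for k = 3, 6 the products
  q_3 q_0 and q_0 q_0 coincide, contradicting right cancellation; and for k = 2, 5, 8 the law
  (zx)(xz) = x of quadratical quasigroups, applied to x = q_0 and z = q_1, yields q_0 = q_5.\<close>

lemma quasigroup_cancel_left:
  assumes "quasigroup Q m" "a \<in> Q" "x \<in> Q" "y \<in> Q" "m a x = m a y"
  shows "x = y"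
proof -
  have "m a y \<in> Q" using assms by (auto simp: quasigroup_def closed_op_def)
  then have "\<exists>!z. z \<in> Q \<and> m a z = m a y" using assms by (auto simp: quasigroup_def)
  then show ?thesis using assms by blast
qed

lemma quasigroup_cancel_right:
  assumes "quasigroup Q m" "a \<in> Q" "x \<in> Q" "y \<in> Q" "m x a = m y a"
  shows "x = y"
proof -
  have "m y a \<in> Q" using assms by (auto simp: quasigroup_def closed_op_def)
  then have "\<exists>!z. z \<in> Q \<and> m z a = m y a" using assms by (auto simp: quasigroup_def)
  then show ?thesis using assms by blast
qed

lemma quadratical_idem:
  assumes "quadratical Q m" "x \<in> Q"
  shows "m x x = x"
proof -
  have qg: "quasigroup Q m" using assms by (simp add: quadratical_def)
  then have xx: "m x x \<in> Q" using assms by (auto simp: quasigroup_def closed_op_def)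
  have "m (m x x) x = m (m x x) (m x x)"
    using assms by (auto simp: quadratical_def)
  then show ?thesis using quasigroup_cancel_left[OF qg xx] assms xx by metis
qed

lemma quadratical_swap_product:
  assumes "quadratical Q m" "x \<in> Q" "z \<in> Q"
  shows "m (m z x) (m x z) = x"
proof -
  have "m (m x x) x = m (m z x) (m x z)"
    using assms unfolding quadratical_def by blast
  then show ?thesis using quadratical_idem[OF assms(1,2)] by simp
qed

lemma k_translatable_product:
  assumes "k_translatable Q m q k" "i < card Q" "j < card Q"
  shows "m (q i) (q j) = m (q 0) (q (nat ((int j - int i * int k) mod int (card Q))))"
  using assms(2,3)
proof (induction i arbitrary: j)
  case 0
  then show ?case by simp
next
  case (Suc i)
  define n where "n = card Q"
  have k: "1 \<le> k" "k < n" and step: "\<forall>i\<in>{1..<n}. \<forall>j<n.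
      m (q i) (q j) = m (q (i - 1)) (q ((j + n - k) mod n))"
    using assms(1) by (auto simp: k_translatable_def Let_def n_def)
  let ?j = "(j + n - k) mod n"
  have "int ?j = (int j - int k + int n) mod int n"
    using k by (simp add: of_nat_mod of_nat_diff diff_add_eq)
  also have "\<dots> = (int j - int k) mod int n"
    by (rule mod_add_self2)
  finally have "int ?j mod int n = (int j - int k) mod int n"
    by simp
  then have index: "(int ?j - int i * int k) mod int n = (int j - int (Suc i) * int k) mod int n"
    by (metis mod_diff_left_eq diff_diff_eq of_nat_Suc distrib_right mult_1)
  have "m (q (Suc i)) (q j) = m (q i) (q ?j)"
    using step Suc.prems by (auto simp: n_def)
  also have "\<dots> = m (q 0) (q (nat ((int ?j - int i * int k) mod int n)))"
    using Suc.IH Suc.prems k by (simp add: n_def)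
  finally show ?case using index by (simp add: n_def)
qed

lemma k_translatable_idem_product:
  assumes "k_translatable Q m q k" and idem: "\<And>x. x \<in> Q \<Longrightarrow> m x x = x"
    and "i < card Q" "j < card Q" "c < card Q"
    and "[int c * (1 - int k) = int j - int i * int k] (mod int (card Q))"
  shows "m (q i) (q j) = q c"
proof -
  have "q c \<in> Q" using assms(1,5) by (auto simp: k_translatable_def Let_def bij_betw_def)
  then have "q c = m (q c) (q c)" using idem by simp
  also have "\<dots> = m (q 0) (q (nat ((int c - int c * int k) mod int (card Q))))"
    using k_translatable_product assms(1,5) by blast
  also have "(int c - int c * int k) mod int (card Q) = (int j - int i * int k) mod int (card Q)"
    using assms(6) by (simp add: cong_def algebra_simps)
  also have "m (q 0) (q (nat \<dots>)) = m (q i) (q j)"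
    using k_translatable_product assms(1,3,4) by metis
  finally show ?thesis ..
qed

lemma quadratical_not_k_translatable_9:
  assumes quad: "quadratical Q m" and trans: "k_translatable Q m q k" and card: "card Q = 9"
  shows False
proof -
  have qg: "quasigroup Q m" using quad by (simp add: quadratical_def)
  have k: "1 \<le> k" "k < 9" and bij: "bij_betw q {..<9} Q"
    using trans card by (auto simp: k_translatable_def Let_def)
  have qQ: "q i \<in> Q" if "i < 9" for i using bij that by (auto simp: bij_betw_def)
  have q_inj: "q a \<noteq> q b" if "a < 9" "b < 9" "a \<noteq> b" for a b
    using bij that by (auto simp: bij_betw_def inj_on_def)
  have prod: "m (q i) (q j) = q c"
    if "i < 9" "j < 9" "c < 9" "[int c * (1 - int k) = int j - int i * int k] (mod 9)" for i j c
    using k_translatable_idem_product[OF trans quadratical_idem[OF quad]] that card by simp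
  consider "k \<in> {1, 4, 7}" | "k \<in> {3, 6}" | "k \<in> {2, 5, 8}" using k by fastforce
  then show False
  proof cases
    case 1
    then have "[int 3 * (1 - int k) = int 0 - int 0 * int k] (mod 9)"
      by (auto simp: cong_def)
    then have "q 3 = m (q 0) (q 0)" using prod[of 0 0 3] by simp
    also have "\<dots> = q 0" using prod[of 0 0 0] by (simp add: cong_def)
    finally show False using q_inj[of 3 0] by simp
  next
    case 2
    then have "[int 0 * (1 - int k) = int 0 - int 3 * int k] (mod 9)"
      by (auto simp: cong_def)
    then have "m (q 3) (q 0) = m (q 0) (q 0)"
      using prod[of 3 0 0] prod[of 0 0 0] by (simp add: cong_def)
    then show False
      using quasigroup_cancel_right[OF qg qQ[of 0] qQ[of 3] qQ[of 0]] q_inj[of 3 0] by simp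
  next
    case 3
    obtain c1 c2 where c: "c1 < 9" "c2 < 9"
      "[int c1 * (1 - int k) = int 0 - int 1 * int k] (mod 9)"
      "[int c2 * (1 - int k) = int 1 - int 0 * int k] (mod 9)"
      "[int 5 * (1 - int k) = int c2 - int c1 * int k] (mod 9)"
    proof -
      from 3 consider "k = 2" | "k = 5" | "k = 8" by blast
      then show thesis
      proof cases
        case 1
        show thesis by (rule that[of 2 8]) (simp_all add: 1 cong_def)
      next
        case 2
        show thesis by (rule that[of 8 2]) (simp_all add: 2 cong_def)
      next
        case 3
        show thesis by (rule that[of 5 5]) (simp_all add: 3 cong_def)
      qed
    qed
    have "q 0 = m (m (q 1) (q 0)) (m (q 0) (q 1))"
      using quadratical_swap_product[OF quad qQ[of 0] qQ[of 1]] by simp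
    also have "\<dots> = m (q c1) (q c2)"
      using prod[of 1 0 c1] prod[of 0 1 c2] c by simp
    also have "\<dots> = q 5" using prod[of c1 c2 5] c by simp
    finally show False using q_inj[of 0 5] by simp
  qed
qed

theorem corollary8p16:
  fixes Q :: "'a set" and m :: "'a \<Rightarrow> 'a \<Rightarrow> 'a"
  assumes "quadratical Q m" and "finite Q" and "card Q = 9"
  shows "\<forall>q k. k \<in> {1..8} \<and> bij_betw q {..<9} Q \<longrightarrow> \<not> k_translatable Q m q k"
  using quadratical_not_k_translatable_9[OF assms(1) _ assms(3)] by blast

end
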